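(* Let $(\mu_n)_{n\ge0}$ be a non-increasing sequence of positive numbers such that $\mu_n=O\left(\frac{1}{n^r}\right)$ for some $r>1$. For each $1\le q<\infty$ there is $p_0>1$ such that $H_\mu(\ell^p_A)\subseteq\ell^q_A$ and $C_\mu(\ell^p_A)\subseteq\ell^q_A$ for each $1<p<p_0$. Moreover, the corresponding restrictions $H_\mu:\ell^p_A\to\ell^q_A$ and $C_\mu:\ell^p_A\to\ell^q_A$ are nuclear if $q=1$ and compact if $q>1$. In particular, $H_\mu:\ell^2_A\to\ell^2_A$ and $C_\mu:\ell^2_A\to\ell^2_A$ are well defined compact operators, and they are nuclear if $r>\frac32$.
   Context: $\ell^p_A$ ($1\le p<\infty$) is the space of $f(z)=\sum_{n\ge0}a_nz^n\in H(\mathbb{D})$ with $\sum_n|a_n|^p<\infty$ (norm $(\sum|a_n|^p)^{1/p}$), and $\ell^\infty_A$ those with $\sup_n|a_n|<\infty$; functions are identified with coefficient sequences. $H_\mu:\ell^\infty_A\to\ell^\infty_A$, $H_\mu((a_n)_{n\ge0})=\left(\sum_{n=0}^\infty\mu_{n+k}a_n\right)_{k\ge0}$ and $C_\mu((a_n)_{n\ge0})=\left(\mu_k\sum_{n=0}^ka_n\right)_{k\ge0}$. An operator $T:X\to Y$ is nuclear if $T=\sum_nx_n^*(\cdot)y_n$ with $x_n^*\in X^*$, $y_n\in Y$, $\sum_n\|x_n^*\|\|y_n\|<\infty$. *)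

theory Defs
  imports "HOL-Analysis.Analysis" "HOL-Library.Landau_Symbols"
begin

text \<open>Elements of the spaces ell^p_A are identified with their (complex) Taylor
coefficient sequences.\<close>

definition lpA :: "real \<Rightarrow> (nat \<Rightarrow> complex) \<Rightarrow> bool" where
  "lpA p a \<longleftrightarrow> summable (\<lambda>n. norm (a n) powr p)"

definition lpA_norm :: "real \<Rightarrow> (nat \<Rightarrow> complex) \<Rightarrow> real" where
  "lpA_norm p a = (\<Sum>n. norm (a n) powr p) powr (1 / p)"

definition hankel_op :: "(nat \<Rightarrow> real) \<Rightarrow> (nat \<Rightarrow> complex) \<Rightarrow> (nat \<Rightarrow> complex)" where
  "hankel_op mu a = (\<lambda>k. \<Sum>n. complex_of_real (mu (n + k)) * a n)"

definition cesaro_op :: "(nat \<Rightarrow> real) \<Rightarrow> (nat \<Rightarrow> complex) \<Rightarrow> (nat \<Rightarrow> complex)" where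
  "cesaro_op mu a = (\<lambda>k. complex_of_real (mu k) * (\<Sum>n\<le>k. a n))"

definition bdd_lin_functional :: "real \<Rightarrow> ((nat \<Rightarrow> complex) \<Rightarrow> complex) \<Rightarrow> real \<Rightarrow> bool" where
  "bdd_lin_functional p f c \<longleftrightarrow>
     (\<forall>a b. lpA p a \<longrightarrow> lpA p b \<longrightarrow> f (\<lambda>n. a n + b n) = f a + f b) \<and>
     (\<forall>a s. lpA p a \<longrightarrow> f (\<lambda>n. s * a n) = s * f a) \<and>
     (\<forall>a. lpA p a \<longrightarrow> norm (f a) \<le> c * lpA_norm p a)"

text \<open>Nuclear operator T : ell^p_A \<rightarrow> ell^q_A: T = \<Sum>k x_k^*(.) y_k with
  \<Sum>k ||x_k^*|| ||y_k|| < \<infinity> (c k bounds the dual norm of x_k^*), the series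
  converging in ell^q_A for every argument.\<close>

definition nuclear_op :: "real \<Rightarrow> real \<Rightarrow> ((nat \<Rightarrow> complex) \<Rightarrow> (nat \<Rightarrow> complex)) \<Rightarrow> bool" where
  "nuclear_op p q T \<longleftrightarrow>
     (\<exists>(x :: nat \<Rightarrow> (nat \<Rightarrow> complex) \<Rightarrow> complex) (y :: nat \<Rightarrow> nat \<Rightarrow> complex) (c :: nat \<Rightarrow> real).
        (\<forall>k. c k \<ge> 0 \<and> bdd_lin_functional p (x k) (c k) \<and> lpA q (y k)) \<and>
        summable (\<lambda>k. c k * lpA_norm q (y k)) \<and>
        (\<forall>a. lpA p a \<longrightarrow> lpA q (T a) \<and>
           (\<lambda>N. lpA_norm q (\<lambda>n. T a n - (\<Sum>k<N. x k a * y k n))) \<longlonglongrightarrow> 0))"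

text \<open>Compact operator T : ell^p_A \<rightarrow> ell^q_A: linear, and the image of the unit ball
  is relatively compact in ell^q_A (sequential form: every sequence in the unit ball
  has a subsequence whose images converge in ell^q_A).\<close>

definition compact_op :: "real \<Rightarrow> real \<Rightarrow> ((nat \<Rightarrow> complex) \<Rightarrow> (nat \<Rightarrow> complex)) \<Rightarrow> bool" where
  "compact_op p q T \<longleftrightarrow>
     (\<forall>a. lpA p a \<longrightarrow> lpA q (T a)) \<and>
     (\<forall>a b. lpA p a \<longrightarrow> lpA p b \<longrightarrow> T (\<lambda>n. a n + b n) = (\<lambda>n. T a n + T b n)) \<and>
     (\<forall>a s. lpA p a \<longrightarrow> T (\<lambda>n. s * a n) = (\<lambda>n. s * T a n)) \<and>
     (\<forall>u :: nat \<Rightarrow> nat \<Rightarrow> complex. (\<forall>j. lpA p (u j) \<and> lpA_norm p (u j) \<le> 1) \<longrightarrow>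
        (\<exists>\<phi> b. strict_mono \<phi> \<and> lpA q b \<and>
           (\<lambda>j. lpA_norm q (\<lambda>n. T (u (\<phi> j)) n - b n)) \<longlonglongrightarrow> 0))"

end

theory Submission
  imports Defs "HOL-Real_Asymp.Real_Asymp"
begin

text \<open>Both operators are given by nonnegative matrices, (T a) k = (\<Sum>n. R k n * a n). If row k
  has ell^p'-norm at most \<sigma> k, where p' = p/(p-1), Hoelder's inequality gives
  |(T a) k| \<le> \<sigma> k * \<parallel>a\<parallel>_p. Hence \<sigma> \<in> ell^q makes T : ell^p \<rightarrow> ell^q compact (a pointwise
  convergent subsequence of the images of the unit ball converges in ell^q by dominated
  convergence), and \<sigma> \<in> ell^1 makes T = (\<Sum>k. R k(\<cdot>) e_k) a nuclear representation.

  From \<mu> n \<le> C (n+1)^-r, the Cesaro rows have \<sigma> k = (k+1)^(1/p') \<mu> k = O((k+1)^-(r - 1/p')),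
  and the splitting (n+k+1)^-r \<le> (k+1)^-e (n+1)^-(r-e) gives the decay (k+1)^-e for the
  Hankel rows whenever e < r - 1/p'. For p close to 1 the exponent e = (r+1)/2 > 1 is
  admissible; for p = 2, e = r/2 gives compactness and e = (2r+1)/4, which exceeds 1 iff
  r > 3/2, nuclearity.\<close>

lemma Holder_inequality_suminf:
  fixes x y :: "nat \<Rightarrow> real" and p q :: real
  assumes p: "p > 1" and conj: "1/p + 1/q = 1"
    and x: "\<And>n. x n \<ge> 0" and y: "\<And>n. y n \<ge> 0"
    and sx: "summable (\<lambda>n. x n powr p)" and sy: "summable (\<lambda>n. y n powr q)"
  shows "summable (\<lambda>n. x n * y n)"
    and "(\<Sum>n. x n * y n) \<le> (\<Sum>n. x n powr p) powr (1/p) * (\<Sum>n. y n powr q) powr (1/q)"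
proof -
  have "1/q = 1 - 1/p"
    using conj by linarith
  then have "0 < 1/q" "1/q < 1"
    using p by simp_all
  then have q: "q > 1"
    by (simp add: zero_less_divide_1_iff)
  define A where "A = (\<Sum>n. x n powr p) powr (1/p)"
  define B where "B = (\<Sum>n. y n powr q) powr (1/q)"
  have A: "A powr p = (\<Sum>n. x n powr p)" and B: "B powr q = (\<Sum>n. y n powr q)"
    using p q by (simp_all add: A_def B_def powr_powr suminf_nonneg sx sy)
  have Young: "x n * y n \<le> a * b * (x n powr p / (a powr p * p) + y n powr q / (b powr q * q))"
    if "a > 0" "b > 0" for a b n
    using Youngs_inequality[OF p q conj, of "x n / a" "y n / b"] that x[of n] y[of n]
    by (simp add: powr_divide field_simps)
  show sxy: "summable (\<lambda>n. x n * y n)"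
    by (rule summable_comparison_test[OF _ summable_add[OF summable_divide[OF sx] summable_divide[OF sy]]])
       (use Young[of 1 1] x y in auto)
  show "(\<Sum>n. x n * y n) \<le> A * B"
  proof (cases "A = 0 \<or> B = 0")
    case True
    then have "(\<lambda>n. x n * y n) = (\<lambda>n. 0)"
      using A B p q suminf_eq_zero_iff[OF sx] suminf_eq_zero_iff[OF sy] x y by fastforce
    then show ?thesis
      by (simp add: A_def B_def)
  next
    case False
    then have "A > 0" "B > 0"
      by (auto simp: A_def B_def)
    then have "(\<Sum>n. x n * y n) \<le> (\<Sum>n. A * B * (x n powr p / (A powr p * p) + y n powr q / (B powr q * q)))"
      using Young x y by (intro suminf_le sxy summable_mult summable_add summable_divide sx sy) auto
    also have "\<dots> = A * B * (1/p + 1/q)"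
      using \<open>A > 0\<close> \<open>B > 0\<close>
      by (simp add: suminf_mult suminf_add[symmetric] suminf_divide summable_add summable_divide sx sy flip: A B)
    finally show ?thesis
      using conj by simp
  qed
qed

lemma summable_powr_of_summable:
  fixes s :: "nat \<Rightarrow> real"
  assumes "\<And>k. s k \<ge> 0" "summable s" "q \<ge> 1"
  shows "summable (\<lambda>k. s k powr q)"
proof (rule summable_comparison_test_ev[OF _ assms(2)])
  have "eventually (\<lambda>k. s k < 1) sequentially"
    using summable_LIMSEQ_zero[OF assms(2)] by (rule order_tendstoD) simp
  then show "eventually (\<lambda>k. norm (s k powr q) \<le> s k) sequentially"
  proof eventually_elim
    case (elim k)
    then have "s k powr q \<le> s k powr 1"
      using assms(1)[of k] assms(3) by (intro powr_mono') auto
    then show ?case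
      using assms(1)[of k] by simp
  qed
qed

lemma summable_shifted_powr:
  assumes "e > 1"
  shows "summable (\<lambda>k. (real k + 1) powr -e)"
  using summable_Suc_iff[of "\<lambda>k. real k powr -e"] assms
  by (simp add: summable_real_powr_iff add.commute)

lemma bigO_imp_bounded_everywhere:
  fixes f g :: "nat \<Rightarrow> real"
  assumes "f \<in> O(g)" and g: "\<And>n. g n > 0"
  obtains C where "\<And>n. \<bar>f n\<bar> \<le> C * g n"
proof -
  obtain c N where c: "c > 0" and ev: "\<And>n. n \<ge> N \<Longrightarrow> norm (f n) \<le> c * norm (g n)"
    using landau_o.bigE[OF assms(1)] unfolding eventually_sequentially by metis
  define C where "C = c + (\<Sum>m<N. \<bar>f m\<bar> / g m)"
  have prefix_nonneg: "(\<Sum>m<N. \<bar>f m\<bar> / g m) \<ge> 0"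
    by (intro sum_nonneg divide_nonneg_pos g) simp
  have "\<bar>f n\<bar> / g n \<le> C" for n
  proof (cases "n < N")
    case True
    then have "\<bar>f n\<bar> / g n \<le> (\<Sum>m<N. \<bar>f m\<bar> / g m)"
      by (intro member_le_sum) (auto intro!: divide_nonneg_pos g)
    then show ?thesis using c by (simp add: C_def)
  next
    case False
    then have "\<bar>f n\<bar> / g n \<le> c"
      using ev[of n] g[of n] by (simp add: divide_le_eq)
    then show ?thesis
      using prefix_nonneg by (simp add: C_def)
  qed
  then show ?thesis
    using g by (intro that) (simp add: divide_le_eq mult.commute)
qed

lemma bigO_inverse_powr_imp_bounded:
  fixes mu :: "nat \<Rightarrow> real"
  assumes "mu \<in> O(\<lambda>n. 1 / real n powr r)"
  obtains C where "\<And>n. \<bar>mu n\<bar> \<le> C * (real n + 1) powr -r"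
proof -
  have "(\<lambda>n. 1 / real n powr r) \<in> O(\<lambda>n. (real n + 1) powr -r)"
    by real_asymp
  from landau_o.big_trans[OF assms this] show ?thesis
    by (rule bigO_imp_bounded_everywhere) (use that in auto)
qed

lemma lpA_norm_nonneg: "lpA_norm p a \<ge> 0"
  unfolding lpA_norm_def by simp

lemma lpA_norm_tendsto_0_dominated:
  fixes f :: "nat \<Rightarrow> nat \<Rightarrow> complex"
  assumes q: "q > 0" and lim: "\<And>n. (\<lambda>j. f j n) \<longlonglongrightarrow> 0"
    and bound: "\<And>j n. norm (f j n) powr q \<le> M n" and M: "summable M"
  shows "(\<lambda>j. lpA_norm q (f j)) \<longlonglongrightarrow> 0"
proof -
  have "(\<lambda>j. norm (f j n) powr q) \<longlonglongrightarrow> 0" for n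
    using lim[of n] q by (intro tendsto_zero_powrI[where b = q]) (auto simp: tendsto_norm_zero_iff)
  then have "(\<lambda>j. \<Sum>n. norm (f j n) powr q) \<longlonglongrightarrow> (\<Sum>n. 0::real)"
    by (intro tannerys_theorem[THEN conjunct2, THEN conjunct2, OF _ _ M])
       (auto intro!: always_eventually bound)
  moreover have "(\<Sum>n. norm (f j n) powr q) \<ge> 0" for j
    by (intro suminf_nonneg summable_comparison_test[OF _ M]) (auto intro: bound)
  ultimately have "(\<lambda>j. (\<Sum>n. norm (f j n) powr q) powr (1/q)) \<longlonglongrightarrow> 0"
    using q by (intro tendsto_zero_powrI[where b = "1/q"]) auto
  then show ?thesis
    unfolding lpA_norm_def .
qed

lemma compact_op_imp_lpA:
  assumes "compact_op p q T" "lpA p a"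
  shows "lpA q (T a)"
  using assms unfolding compact_op_def by blast

lemma pointwise_convergent_subseq:
  fixes v :: "nat \<Rightarrow> nat \<Rightarrow> complex" and s :: "nat \<Rightarrow> real"
  assumes "\<And>j k. norm (v j k) \<le> s k"
  obtains \<phi> b where "strict_mono \<phi>" "\<And>k. norm (b k) \<le> s k" "\<And>k. (\<lambda>j. v (\<phi> j) k) \<longlonglongrightarrow> b k"
proof -
  define K where "K = PiE UNIV (\<lambda>k. cball (0::complex) (s k))"
  have "compactin (product_topology (\<lambda>i. euclidean) UNIV) K"
    unfolding K_def by (subst compactin_PiE) auto
  then have "seq_compact K"
    by (simp add: euclidean_product_topology compact_imp_seq_compact)
  moreover have "\<forall>j. v j \<in> K"
    using assms by (auto simp: K_def)
  ultimately obtain b \<phi> where b: "b \<in> K" "strict_mono \<phi>" "(v \<circ> \<phi>) \<longlonglongrightarrow> b"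
    unfolding seq_compact_def by metis
  have "(\<lambda>j. v (\<phi> j) k) \<longlonglongrightarrow> b k" for k
    using continuous_on_tendsto_compose[OF continuous_on_product_coordinates[of k] b(3)]
    by (simp add: o_def)
  moreover have "norm (b k) \<le> s k" for k
    using b(1) by (auto simp: K_def PiE_iff)
  ultimately show ?thesis
    using that b(2) by blast
qed

definition matrix_op :: "(nat \<Rightarrow> nat \<Rightarrow> real) \<Rightarrow> (nat \<Rightarrow> complex) \<Rightarrow> nat \<Rightarrow> complex" where
  "matrix_op R a = (\<lambda>k. \<Sum>n. complex_of_real (R k n) * a n)"

locale row_bounded_matrix =
  fixes p :: real and R :: "nat \<Rightarrow> nat \<Rightarrow> real" and \<sigma> :: "nat \<Rightarrow> real"
  assumes exponent_gt_1: "p > 1"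
    and entries_nonneg: "R k n \<ge> 0"
    and bound_nonneg: "\<sigma> k \<ge> 0"
    and row_summable: "summable (\<lambda>n. R k n powr (p/(p-1)))"
    and row_norm_le: "(\<Sum>n. R k n powr (p/(p-1))) \<le> \<sigma> k powr (p/(p-1))"
begin

lemma matrix_op_Holder:
  assumes "lpA p a"
  shows "summable (\<lambda>n. norm (complex_of_real (R k n) * a n))"
    and "norm (matrix_op R a k) \<le> \<sigma> k * lpA_norm p a"
proof -
  have conj: "1/p + 1/(p/(p-1)) = 1"
    using exponent_gt_1 by (simp add: field_simps)
  have eq: "norm (complex_of_real (R k n) * a n) = norm (a n) * R k n" for n
    using entries_nonneg by (simp add: norm_mult)
  note Holder = Holder_inequality_suminf[OF exponent_gt_1 conj norm_ge_zero entries_nonneg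
      assms[unfolded lpA_def] row_summable]
  show summable: "summable (\<lambda>n. norm (complex_of_real (R k n) * a n))"
    unfolding eq by (rule Holder(1))
  have "(\<Sum>n. R k n powr (p/(p-1))) powr (1/(p/(p-1))) \<le> \<sigma> k"
    using powr_mono2[OF _ _ row_norm_le, of "1/(p/(p-1))"] exponent_gt_1 bound_nonneg
    by (simp add: powr_powr suminf_nonneg row_summable entries_nonneg)
  then have "(\<Sum>n. norm (a n) * R k n) \<le> lpA_norm p a * \<sigma> k"
    using order_trans[OF Holder(2) mult_left_mono] unfolding lpA_norm_def by simp
  moreover have "norm (matrix_op R a k) \<le> (\<Sum>n. norm (a n) * R k n)"
    using summable_norm[OF summable] unfolding matrix_op_def eq .
  ultimately show "norm (matrix_op R a k) \<le> \<sigma> k * lpA_norm p a"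
    by (simp add: mult.commute)
qed

lemma summable_row_mult:
  assumes "lpA p a"
  shows "summable (\<lambda>n. complex_of_real (R k n) * a n)"
  using summable_norm_cancel[OF matrix_op_Holder(1)[OF assms]] .

lemma matrix_op_add:
  assumes "lpA p a" "lpA p b"
  shows "matrix_op R (\<lambda>n. a n + b n) = (\<lambda>k. matrix_op R a k + matrix_op R b k)"
  unfolding matrix_op_def
  by (simp add: distrib_left suminf_add[OF summable_row_mult[OF assms(1)] summable_row_mult[OF assms(2)]])

lemma matrix_op_mult:
  assumes "lpA p a"
  shows "matrix_op R (\<lambda>n. s * a n) = (\<lambda>k. s * matrix_op R a k)"
  unfolding matrix_op_def
  by (simp add: mult.left_commute suminf_mult[OF summable_row_mult[OF assms]])

lemma bdd_lin_functional_matrix_op_row: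
  "bdd_lin_functional p (\<lambda>a. matrix_op R a k) (\<sigma> k)"
  unfolding bdd_lin_functional_def
  by (simp add: matrix_op_add matrix_op_mult matrix_op_Holder(2))

lemma lpA_matrix_op:
  assumes q: "q > 0" and \<sigma>: "summable (\<lambda>k. \<sigma> k powr q)" and a: "lpA p a"
  shows "lpA q (matrix_op R a)"
  unfolding lpA_def
proof (rule summable_comparison_test[OF _ summable_mult2[OF \<sigma>]])
  have "norm (matrix_op R a k) powr q \<le> \<sigma> k powr q * lpA_norm p a powr q" for k
    using powr_mono2[OF _ _ matrix_op_Holder(2)[OF a]] q bound_nonneg lpA_norm_nonneg
    by (simp add: powr_mult)
  then show "\<exists>N. \<forall>k\<ge>N. norm (norm (matrix_op R a k) powr q) \<le> \<sigma> k powr q * lpA_norm p a powr q"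
    by simp
qed

lemma compact_op_matrix_op:
  assumes q: "q > 0" and \<sigma>: "summable (\<lambda>k. \<sigma> k powr q)"
  shows "compact_op p q (matrix_op R)"
  unfolding compact_op_def
proof (intro conjI allI impI)
  fix u :: "nat \<Rightarrow> nat \<Rightarrow> complex"
  assume u: "\<forall>j. lpA p (u j) \<and> lpA_norm p (u j) \<le> 1"
  have bounded: "norm (matrix_op R (u j) k) \<le> \<sigma> k" for j k
    using order_trans[OF matrix_op_Holder(2) mult_left_le] u bound_nonneg by blast
  obtain \<phi> b where \<phi>: "strict_mono \<phi>" and b: "\<And>k. norm (b k) \<le> \<sigma> k"
    and lim: "\<And>k. (\<lambda>j. matrix_op R (u (\<phi> j)) k) \<longlonglongrightarrow> b k"
    using pointwise_convergent_subseq[of "\<lambda>j. matrix_op R (u j)", OF bounded] by blast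
  have "lpA q b"
    unfolding lpA_def
    by (rule summable_comparison_test[OF _ \<sigma>]) (use b q in \<open>auto intro!: powr_mono2\<close>)
  moreover have "(\<lambda>j. lpA_norm q (\<lambda>k. matrix_op R (u (\<phi> j)) k - b k)) \<longlonglongrightarrow> 0"
  proof (rule lpA_norm_tendsto_0_dominated[OF q _ _ summable_mult[OF \<sigma>, of "2 powr q"]])
    show "(\<lambda>j. matrix_op R (u (\<phi> j)) k - b k) \<longlonglongrightarrow> 0" for k
      using tendsto_diff[OF lim tendsto_const, of k "b k"] by simp
    fix j k
    have "norm (matrix_op R (u (\<phi> j)) k - b k) \<le> 2 * \<sigma> k"
      using norm_triangle_ineq4[of "matrix_op R (u (\<phi> j)) k" "b k"] bounded[of "\<phi> j" k] b[of k]
      by linarith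
    then have "norm (matrix_op R (u (\<phi> j)) k - b k) powr q \<le> (2 * \<sigma> k) powr q"
      using q by (intro powr_mono2) auto
    then show "norm (matrix_op R (u (\<phi> j)) k - b k) powr q \<le> 2 powr q * \<sigma> k powr q"
      using bound_nonneg[of k] by (simp add: powr_mult)
  qed
  ultimately show "\<exists>\<phi> b. strict_mono \<phi> \<and> lpA q b \<and>
      (\<lambda>j. lpA_norm q (\<lambda>n. matrix_op R (u (\<phi> j)) n - b n)) \<longlonglongrightarrow> 0"
    using \<phi> by blast
qed (use matrix_op_add matrix_op_mult lpA_matrix_op[OF assms] in auto)

lemma nuclear_op_matrix_op:
  assumes q: "q \<ge> 1" and \<sigma>: "summable \<sigma>"
  shows "nuclear_op p q (matrix_op R)"
proof -
  define e :: "nat \<Rightarrow> nat \<Rightarrow> complex" where "e k = (\<lambda>n. if n = k then 1 else 0)" for k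
  have "(\<lambda>n. norm (e k n) powr q) = (\<lambda>n. if n = k then 1 else 0)" for k
    using q by (auto simp: e_def)
  then have e_sums: "(\<lambda>n. norm (e k n) powr q) sums 1" for k
    using sums_single[of k "\<lambda>_. 1::real"] by simp
  have "lpA q (e k)" "lpA_norm q (e k) = 1" for k
    using e_sums by (auto simp: lpA_def lpA_norm_def sums_iff)
  moreover have "(\<lambda>N. lpA_norm q (\<lambda>n. matrix_op R a n - (\<Sum>k<N. matrix_op R a k * e k n))) \<longlonglongrightarrow> 0"
    if a: "lpA p a" for a
  proof -
    have Ta: "summable (\<lambda>n. norm (matrix_op R a n) powr q)"
      using lpA_matrix_op[OF _ summable_powr_of_summable[OF bound_nonneg \<sigma> q] a] q
      by (simp add: lpA_def)
    have tail: "matrix_op R a n - (\<Sum>k<N. matrix_op R a k * e k n) =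
        (if n < N then 0 else matrix_op R a n)" for N n
      by (simp add: e_def if_distrib[of "\<lambda>x. _ * x"] sum.delta cong: if_cong)
    show ?thesis
      unfolding tail
    proof (rule lpA_norm_tendsto_0_dominated[OF _ _ _ Ta])
      show "(\<lambda>N. if n < N then 0 else matrix_op R a n) \<longlonglongrightarrow> 0" for n
        by (rule tendsto_eventually, rule eventually_sequentiallyI[of "Suc n"]) auto
    qed (use q in auto)
  qed
  ultimately show ?thesis
    unfolding nuclear_op_def
    using bound_nonneg bdd_lin_functional_matrix_op_row \<sigma>
      lpA_matrix_op[OF _ summable_powr_of_summable[OF bound_nonneg \<sigma> q]] q
    by (intro exI[of _ "\<lambda>k a. matrix_op R a k"] exI[of _ e] exI[of _ \<sigma>]) auto
qed

lemma row_bounded_matrix_mono: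
  assumes "\<And>k. \<sigma> k \<le> \<tau> k"
  shows "row_bounded_matrix p R \<tau>"
proof
  have "p/(p-1) \<ge> 0"
    using exponent_gt_1 by simp
  then show "(\<Sum>n. R k n powr (p/(p-1))) \<le> \<tau> k powr (p/(p-1))" for k
    using row_norm_le[of k] powr_mono2[OF _ bound_nonneg assms] by (meson order_trans)
  show "\<tau> k \<ge> 0" for k
    using bound_nonneg[of k] assms[of k] by linarith
qed (use exponent_gt_1 entries_nonneg row_summable in auto)

end

lemma compact_nuclear_of_power_decay:
  assumes R: "row_bounded_matrix p R (\<lambda>k. D * (real k + 1) powr -e)" and q: "q \<ge> 1" "e * q > 1"
  shows "compact_op p q (matrix_op R)" and "e > 1 \<Longrightarrow> nuclear_op p q (matrix_op R)"
proof -
  have D: "D \<ge> 0"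
    using row_bounded_matrix.bound_nonneg[OF R, of 0] by simp
  have "(\<lambda>k. (D * (real k + 1) powr -e) powr q) = (\<lambda>k. D powr q * (real k + 1) powr -(e * q))"
    using D by (simp add: powr_mult powr_powr)
  then have "summable (\<lambda>k. (D * (real k + 1) powr -e) powr q)"
    using summable_mult[OF summable_shifted_powr[OF q(2)]] by simp
  then show "compact_op p q (matrix_op R)"
    using row_bounded_matrix.compact_op_matrix_op[OF R] q by simp
  show "nuclear_op p q (matrix_op R)" if "e > 1"
    using row_bounded_matrix.nuclear_op_matrix_op[OF R q(1)] summable_mult[OF summable_shifted_powr[OF that]]
    by simp
qed

definition hankel_matrix :: "(nat \<Rightarrow> real) \<Rightarrow> nat \<Rightarrow> nat \<Rightarrow> real" where
  "hankel_matrix mu = (\<lambda>k n. mu (n + k))"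

definition cesaro_matrix :: "(nat \<Rightarrow> real) \<Rightarrow> nat \<Rightarrow> nat \<Rightarrow> real" where
  "cesaro_matrix mu = (\<lambda>k n. if n \<le> k then mu k else 0)"

lemma hankel_op_eq_matrix_op: "hankel_op mu = matrix_op (hankel_matrix mu)"
  unfolding hankel_op_def matrix_op_def hankel_matrix_def ..

lemma cesaro_op_eq_matrix_op: "cesaro_op mu = matrix_op (cesaro_matrix mu)"
proof (intro ext)
  fix a k
  have "matrix_op (cesaro_matrix mu) a k = (\<Sum>n\<le>k. complex_of_real (mu k) * a n)"
    unfolding matrix_op_def cesaro_matrix_def by (subst suminf_finite[of "{..k}"]) auto
  then show "cesaro_op mu a k = matrix_op (cesaro_matrix mu) a k"
    by (simp add: cesaro_op_def sum_distrib_left)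
qed

lemma shifted_powr_split_le:
  fixes n k :: nat
  assumes "0 \<le> e" "e \<le> r"
  shows "(real (n + k) + 1) powr -r \<le> (real k + 1) powr -e * (real n + 1) powr -(r - e)"
proof -
  have "(real (n + k) + 1) powr -r = (real (n + k) + 1) powr -e * (real (n + k) + 1) powr -(r - e)"
    by (simp flip: powr_add)
  also have "\<dots> \<le> (real k + 1) powr -e * (real n + 1) powr -(r - e)"
    using assms by (intro mult_mono powr_mono2') auto
  finally show ?thesis .
qed

lemma hankel_matrix_row_bounded:
  fixes mu :: "nat \<Rightarrow> real"
  assumes mu: "\<And>n. mu n \<ge> 0" "\<And>n. mu n \<le> C * (real n + 1) powr -r"
    and p: "p > 1" and e: "e \<ge> 0" "e < r - (p-1)/p"
  obtains D where "row_bounded_matrix p (hankel_matrix mu) (\<lambda>k. D * (real k + 1) powr -e)"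
proof -
  define P where "P = p/(p-1)"
  have P: "P > 0" "(r - e) * P > 1"
    using p e by (simp_all add: P_def field_simps)
  have C: "C \<ge> 0"
    using mu(1)[of 0] mu(2)[of 0] by simp
  have "0 < (p-1)/p"
    using p by simp
  then have "e < r"
    using e by linarith
  define Z where "Z = (\<Sum>n. (real n + 1) powr -((r - e) * P))"
  have Z: "summable (\<lambda>n. (real n + 1) powr -((r - e) * P))"
    by (rule summable_shifted_powr[OF P(2)])
  define D where "D = C * Z powr (1/P)"
  have entry_le: "mu (n + k) powr P \<le> (C * (real k + 1) powr -e) powr P * (real n + 1) powr -((r - e) * P)"
    for n k
  proof -
    have "mu (n + k) \<le> C * ((real k + 1) powr -e * (real n + 1) powr -(r - e))"
      using order_trans[OF mu(2) mult_left_mono[OF shifted_powr_split_le C]] e \<open>e < r\<close> by simp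
    then have "mu (n + k) powr P \<le> (C * ((real k + 1) powr -e * (real n + 1) powr -(r - e))) powr P"
      using mu(1) P by (intro powr_mono2) auto
    also have "\<dots> = (C * (real k + 1) powr -e) powr P * (real n + 1) powr -((r - e) * P)"
      using C by (simp add: powr_mult powr_powr mult.assoc) (simp add: algebra_simps)
    finally show ?thesis .
  qed
  have "row_bounded_matrix p (hankel_matrix mu) (\<lambda>k. D * (real k + 1) powr -e)"
  proof (unfold_locales, unfold hankel_matrix_def P_def[symmetric])
    fix k
    show "summable (\<lambda>n. mu (n + k) powr P)"
      by (rule summable_comparison_test[OF _ summable_mult[OF Z]]) (use entry_le in auto)
    then have "(\<Sum>n. mu (n + k) powr P) \<le> (\<Sum>n. (C * (real k + 1) powr -e) powr P * (real n + 1) powr -((r - e) * P))"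
      by (intro suminf_le entry_le summable_mult Z)
    also have "\<dots> = (D * (real k + 1) powr -e) powr P"
      using C P by (simp add: suminf_mult[OF Z] D_def Z_def powr_mult powr_powr suminf_nonneg[OF Z])
    finally show "(\<Sum>n. mu (n + k) powr P) \<le> (D * (real k + 1) powr -e) powr P" .
  qed (use p mu(1) C in \<open>auto simp: D_def\<close>)
  then show ?thesis ..
qed

lemma cesaro_matrix_row_bounded:
  fixes mu :: "nat \<Rightarrow> real"
  assumes mu: "\<And>n. mu n \<ge> 0" "\<And>n. mu n \<le> C * (real n + 1) powr -r" and p: "p > 1"
  shows "row_bounded_matrix p (cesaro_matrix mu) (\<lambda>k. C * (real k + 1) powr -(r - (p-1)/p))"
proof -
  have C: "C \<ge> 0"
    using mu(1)[of 0] mu(2)[of 0] by simp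
  define P where "P = p/(p-1)"
  have P: "P > 0" "1/P = (p-1)/p"
    using p by (simp_all add: P_def)
  show ?thesis
  proof (unfold_locales, unfold cesaro_matrix_def P_def[symmetric])
    fix k
    have "(\<Sum>n. (if n \<le> k then mu k else 0) powr P) = (real k + 1) * mu k powr P"
      by (subst suminf_finite[of "{..k}"]) auto
    also have "\<dots> \<le> (real k + 1) * (C * (real k + 1) powr -r) powr P"
      using mu P by (intro mult_left_mono powr_mono2) auto
    also have "\<dots> = C powr P * ((real k + 1) * (real k + 1) powr -(r * P))"
      using C by (simp add: powr_mult powr_powr mult.left_commute)
    also have "\<dots> = (C * (real k + 1) powr -(r - 1/P)) powr P"
    proof -
      have "-(r - 1/P) * P = 1 + -(r * P)"
        using P by (simp add: field_simps)
      then show ?thesis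
        using C by (simp add: powr_mult_base powr_mult powr_powr)
    qed
    finally show "(\<Sum>n. (if n \<le> k then mu k else 0) powr P) \<le> (C * (real k + 1) powr -(r - (p-1)/p)) powr P"
      unfolding P(2) .
    show "summable (\<lambda>n. (if n \<le> k then mu k else 0) powr P)"
      by (rule summable_finite[of "{..k}"]) auto
  qed (use p mu(1) C in auto)
qed

lemma hankel_cesaro_compact_nuclear:
  fixes mu :: "nat \<Rightarrow> real"
  assumes mu: "\<And>n. mu n \<ge> 0" "\<And>n. mu n \<le> C * (real n + 1) powr -r"
    and p: "p > 1" and q: "q \<ge> 1" and e: "e * q > 1" "e < r - (p-1)/p"
  shows "compact_op p q (hankel_op mu) \<and> compact_op p q (cesaro_op mu) \<and>
    (e > 1 \<longrightarrow> nuclear_op p q (hankel_op mu) \<and> nuclear_op p q (cesaro_op mu))"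
proof -
  have "e > 0"
    using e(1) q by (smt (verit) mult_nonpos_nonneg)
  obtain D where hankel: "row_bounded_matrix p (hankel_matrix mu) (\<lambda>k. D * (real k + 1) powr -e)"
    using hankel_matrix_row_bounded[OF mu p _ e(2)] \<open>e > 0\<close> by auto
  have C: "C \<ge> 0"
    using mu(1)[of 0] mu(2)[of 0] by simp
  have "row_bounded_matrix p (cesaro_matrix mu) (\<lambda>k. C * (real k + 1) powr -(r - (p-1)/p))"
    by (rule cesaro_matrix_row_bounded[OF mu p])
  then have cesaro: "row_bounded_matrix p (cesaro_matrix mu) (\<lambda>k. C * (real k + 1) powr -e)"
    by (rule row_bounded_matrix.row_bounded_matrix_mono) (use C e(2) in \<open>auto intro!: mult_left_mono powr_mono\<close>)
  show ?thesis
    unfolding hankel_op_eq_matrix_op cesaro_op_eq_matrix_op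
    using compact_nuclear_of_power_decay[OF hankel q e(1)] compact_nuclear_of_power_decay[OF cesaro q e(1)]
    by blast
qed

lemma hankel_cesaro_nuclear_near_1:
  fixes mu :: "nat \<Rightarrow> real"
  assumes mu: "\<And>n. mu n \<ge> 0" "\<And>n. mu n \<le> C * (real n + 1) powr -r"
    and r: "r > 1" and p: "1 < p" "p < (r + 1) / 2" and q: "q \<ge> 1"
  shows "compact_op p q (hankel_op mu) \<and> compact_op p q (cesaro_op mu) \<and>
    nuclear_op p q (hankel_op mu) \<and> nuclear_op p q (cesaro_op mu)"
proof -
  have "(p - 1) / p < p - 1"
    using p by (simp add: divide_less_eq)
  then have e: "(r + 1) / 2 < r - (p - 1) / p"
    using p by argo
  have "1 < (r + 1) / 2 * 1"
    using r by simp
  also have "\<dots> \<le> (r + 1) / 2 * q"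
    using r q by (intro mult_left_mono) auto
  finally show ?thesis
    using hankel_cesaro_compact_nuclear[OF mu p(1) q _ e] r by simp
qed

theorem proposition32:
  fixes mu :: "nat \<Rightarrow> real" and r :: real
  assumes pos: "\<forall>n. mu n > 0"
    and noninc: "decseq mu"
    and r: "r > 1"
    and decay: "mu \<in> O(\<lambda>n. 1 / real n powr r)"
  shows "(\<forall>q::real. q \<ge> 1 \<longrightarrow> (\<exists>p0 > 1. \<forall>p::real. 1 < p \<and> p < p0 \<longrightarrow>
            (\<forall>a. lpA p a \<longrightarrow> lpA q (hankel_op mu a)) \<and>
            (\<forall>a. lpA p a \<longrightarrow> lpA q (cesaro_op mu a)) \<and>
            (q = 1 \<longrightarrow> nuclear_op p q (hankel_op mu) \<and> nuclear_op p q (cesaro_op mu)) \<and>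
            (q > 1 \<longrightarrow> compact_op p q (hankel_op mu) \<and> compact_op p q (cesaro_op mu))))
       \<and> (\<forall>a. lpA 2 a \<longrightarrow> lpA 2 (hankel_op mu a))
       \<and> (\<forall>a. lpA 2 a \<longrightarrow> lpA 2 (cesaro_op mu a))
       \<and> compact_op 2 2 (hankel_op mu) \<and> compact_op 2 2 (cesaro_op mu)
       \<and> (r > 3/2 \<longrightarrow> nuclear_op 2 2 (hankel_op mu) \<and> nuclear_op 2 2 (cesaro_op mu))"
proof -
  obtain C where C: "\<And>n. \<bar>mu n\<bar> \<le> C * (real n + 1) powr -r"
    using bigO_inverse_powr_imp_bounded[OF decay] by blast
  have mu: "\<And>n. mu n \<ge> 0" "\<And>n. mu n \<le> C * (real n + 1) powr -r"
    using pos C by (auto simp: less_imp_le abs_le_iff)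
  note near_1 = hankel_cesaro_nuclear_near_1[OF mu r]
  have l2: "compact_op 2 2 (hankel_op mu) \<and> compact_op 2 2 (cesaro_op mu)"
    using hankel_cesaro_compact_nuclear[OF mu, of 2 2 "r / 2"] r by simp
  have nuclear_l2: "nuclear_op 2 2 (hankel_op mu) \<and> nuclear_op 2 2 (cesaro_op mu)" if "r > 3/2"
    using hankel_cesaro_compact_nuclear[OF mu, of 2 2 "(2 * r + 1) / 4"] that by simp
  show ?thesis
  proof (intro conjI allI impI)
    show "\<exists>p0 > 1. \<forall>p::real. 1 < p \<and> p < p0 \<longrightarrow>
        (\<forall>a. lpA p a \<longrightarrow> lpA q (hankel_op mu a)) \<and> (\<forall>a. lpA p a \<longrightarrow> lpA q (cesaro_op mu a)) \<and>
        (q = 1 \<longrightarrow> nuclear_op p q (hankel_op mu) \<and> nuclear_op p q (cesaro_op mu)) \<and>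
        (q > 1 \<longrightarrow> compact_op p q (hankel_op mu) \<and> compact_op p q (cesaro_op mu))"
      if "q \<ge> 1" for q
      using near_1[OF _ _ that] r
      by (intro exI[of _ "(r + 1) / 2"]) (auto intro: compact_op_imp_lpA)
  qed (use l2 nuclear_l2 compact_op_imp_lpA in auto)
qed

end
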